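(* Let $\mu$ be a probability measure on $[0,\infty)$ with mean $1$ such that $\Lambda_\mu$ is finite on a neighborhood of $0$. Let $r_0\in[0,\infty)$ be the unique real number with $G_\mu=1$ on $[0,r_0]$ and $G_\mu<1$ on $(r_0,\infty)$, and suppose $G_\mu$ is continuous and strictly decreasing on $[r_0,\infty)$; write $G_\mu^{-1}$ for the inverse of $G_\mu|_{[r_0,\infty)}$ (defined on $(0,1]$). Then $H_\mu|_{(0,1]}=G_\mu^{-1}$, where $H_\mu(\rho)=\sup\{r\in[0,\infty):G_\mu(r)\ge\rho\}$. Let $P$ be a probability measure and $\nu$ a $\sigma$-finite positive measure with $dP=p\,d\nu$, let $\psi(y)=P(p\le y)$ for $y\ge0$, and suppose $(0,1)\subset\mathrm{range}(\psi)$. Define $\phi(y)=G_\mu^{-1}(\psi(y))1_{\psi(y)>0}$. Then $Q(dx)=\phi(p(x))P(dx)$ is a probability measure, $dQ/dP$ has distribution $\mu$ under $P$, and $Q\in\mathcal{U}^\mu(P)$.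
   Context: For a probability measure $\mu$ on $[0,\infty)$ with mean $1$, $G_\mu(r)=\mu([r,\infty))$ for $r\ge0$ and $\Lambda_\mu(\lambda)=\log\big((\lambda+1)\int_0^\infty G_\mu(z)z^\lambda\,dz\big)$ for $\lambda\ge0$. With $\Lambda_Q^f(\lambda)=\log E_Q[e^{\lambda f}]$, and $\Lambda_\mu$ finite near $0$, $\mathcal{U}^\mu(P)=\{Q \text{ probability measure}: Q\ll P,\ \Lambda_Q^{\log(dQ/dP)}(\lambda)\le\Lambda_\mu(\lambda)\ \text{for all }\lambda>0\}$. *)

theory Defs
  imports "HOL-Probability.Probability"
begin

definition eln :: "ennreal \<Rightarrow> ereal" where
  "eln x = (if x = 0 then -\<infinity> else if x = \<infinity> then \<infinity> else ereal (ln (enn2real x)))"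

definition eexp :: "ereal \<Rightarrow> ennreal" where
  "eexp x = (case x of ereal r \<Rightarrow> ennreal (exp r) | PInfty \<Rightarrow> \<infinity> | MInfty \<Rightarrow> 0)"

definition G_mu :: "real measure \<Rightarrow> real \<Rightarrow> real" where
  "G_mu \<mu> r = measure \<mu> {r..}"

definition Lambda_mu :: "real measure \<Rightarrow> real \<Rightarrow> ereal" where
  "Lambda_mu \<mu> l = eln (ennreal (l + 1) *
       (\<integral>\<^sup>+ z. indicator {0..} z * ennreal (G_mu \<mu> z * z powr l) \<partial>lborel))"

definition H_mu :: "real measure \<Rightarrow> real \<Rightarrow> real" where
  "H_mu \<mu> \<rho> = Sup {r. 0 \<le> r \<and> \<rho> \<le> G_mu \<mu> r}"

definition Lambda_Q :: "'a measure \<Rightarrow> ('a \<Rightarrow> ereal) \<Rightarrow> real \<Rightarrow> ereal" where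
  "Lambda_Q Q f l = eln (\<integral>\<^sup>+ x. eexp (ereal l * f x) \<partial>Q)"

definition U_mu :: "real measure \<Rightarrow> 'a measure \<Rightarrow> 'a measure set" where
  "U_mu \<mu> P = {Q. prob_space Q \<and> sets Q = sets P \<and> absolutely_continuous P Q \<and>
      (\<forall>l>0. Lambda_Q Q (\<lambda>x. eln (RN_deriv P Q x)) l \<le> Lambda_mu \<mu> l)}"

end

theory Submission
  imports Defs
begin

text \<open>Since \<open>G\<close> maps \<open>[r\<^sub>0, \<infinity>)\<close> continuously and strictly decreasingly onto \<open>(0, 1]\<close>
  (it tends to \<open>0\<close>), the set \<open>{r \<ge> 0. G r \<ge> \<rho>}\<close> is the interval \<open>[0, G\<inverse> \<rho>]\<close>, so \<open>H = G\<inverse>\<close>.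
  As \<open>\<psi>\<close> is the distribution function of \<open>p\<close> under \<open>P\<close> and takes every value in \<open>(0, 1)\<close>,
  \<open>\<psi> \<circ> p\<close> is uniformly distributed; hence \<open>\<phi> \<circ> p = G\<inverse> \<circ> \<psi> \<circ> p\<close> has tail function \<open>G\<close>,
  i.e.\ distribution \<open>\<mu>\<close>. Since \<open>\<mu>\<close> has mean \<open>1\<close>, \<open>Q\<close> is a probability measure with
  \<open>dQ/dP = \<phi> \<circ> p\<close>, and \<open>E\<^sub>Q[(dQ/dP)\<^sup>\<lambda>] = E\<^sub>\<mu>[x\<^sup>\<lambda>\<^sup>+\<^sup>1] = (\<lambda> + 1) \<integral>\<^sub>0\<^sup>\<infinity> G(z) z\<^sup>\<lambda> dz\<close>
  by the layer-cake formula, so the defining inequality of \<open>\<U>\<^sup>\<mu>(P)\<close> even holds with equality.\<close>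

lemma G_mu_antimono:
  assumes "finite_measure \<mu>" "sets \<mu> = sets borel" "x \<le> y"
  shows "G_mu \<mu> y \<le> G_mu \<mu> x"
  unfolding G_mu_def using assms by (intro finite_measure.finite_measure_mono) auto

lemma borel_measurable_G_mu:
  assumes "finite_measure \<mu>" "sets \<mu> = sets borel"
  shows "G_mu \<mu> \<in> borel_measurable borel"
proof -
  have "mono (\<lambda>r. - G_mu \<mu> r)" using G_mu_antimono[OF assms] by (auto simp: mono_def)
  then have "(\<lambda>r. - G_mu \<mu> r) \<in> borel_measurable borel" by (rule borel_measurable_mono)
  then show ?thesis using borel_measurable_uminus[of "\<lambda>r. - G_mu \<mu> r"] by simp
qed

lemma G_mu_tendsto_0:
  assumes "finite_measure \<mu>" "sets \<mu> = sets borel"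
  shows "(\<lambda>n. G_mu \<mu> (real n)) \<longlonglongrightarrow> 0"
proof -
  interpret finite_measure \<mu> by fact
  have "(\<lambda>n. measure \<mu> {real n..}) \<longlonglongrightarrow> measure \<mu> (\<Inter>n. {real n..})"
    using assms(2) by (intro finite_Lim_measure_decseq) (simp_all add: image_subset_iff decseq_def)
  moreover have "(\<Inter>n. {real n..}) = {}"
  proof (intro equals0I)
    fix x assume "x \<in> (\<Inter>n. {real n..})"
    moreover obtain n where "x < real n" using reals_Archimedean2 by blast
    ultimately show False by (auto dest: spec[of _ n])
  qed
  ultimately show ?thesis unfolding G_mu_def by simp
qed

lemma measure_eqI_atLeast:
  fixes M N :: "real measure"
  assumes "finite_measure M" "sets M = sets borel" "sets N = sets borel"
    and "\<And>r. emeasure M {r..} = emeasure N {r..}"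
  shows "M = N"
proof (rule measure_eqI_generator_eq[where \<Omega>=UNIV and E="range atLeast" and A="\<lambda>i. {- real i..}"])
  show "Int_stable (range (atLeast :: real \<Rightarrow> _))"
    unfolding Int_stable_def
  proof safe
    fix a b :: real
    show "{a..} \<inter> {b..} \<in> range atLeast" by (rule range_eqI[of _ _ "max a b"]) auto
  qed
  show "sets M = sigma_sets UNIV (range atLeast)" "sets N = sigma_sets UNIV (range atLeast)"
    using assms(2,3) by (simp_all add: borel_Ici sets_measure_of)
  show "(\<Union>i. {- real i..}) = UNIV"
  proof (intro set_eqI iffI)
    fix x :: real
    obtain n where "- x \<le> real n" using real_arch_simple by blast
    then show "x \<in> (\<Union>i. {- real i..})" by (auto intro!: exI[of _ n])
  qed simp
  show "emeasure M {- real i..} \<noteq> \<infinity>" for i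
    using finite_measure.emeasure_finite[OF assms(1)] by simp
qed (use assms(4) in auto)

locale invertible_tail =
  fixes \<mu> :: "real measure" and r0 :: real
  assumes mu_prob: "prob_space \<mu>" and mu_sets: "sets \<mu> = sets borel"
    and mu_supp: "measure \<mu> {0..} = 1"
    and r0_nonneg: "0 \<le> r0"
    and r0_one: "\<forall>r\<in>{0..r0}. G_mu \<mu> r = 1"
    and G_cont: "continuous_on {r0..} (G_mu \<mu>)"
    and G_strict: "strict_antimono_on {r0..} (G_mu \<mu>)"
begin

abbreviation "G \<equiv> G_mu \<mu>"
abbreviation "Ginv \<equiv> the_inv_into {r0..} G"

sublocale prob_space \<mu> by (rule mu_prob)

lemma G_antimono: "x \<le> y \<Longrightarrow> G y \<le> G x"
  using G_mu_antimono mu_sets finite_measure_axioms by blast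

lemma G_le_1: "G x \<le> 1"
  unfolding G_mu_def by simp

lemma G_eq_1:
  assumes "r \<le> r0"
  shows "G r = 1"
proof (cases "0 \<le> r")
  case True
  then show ?thesis using assms r0_one by simp
next
  case False
  then have "G 0 \<le> G r" by (intro G_antimono) simp
  moreover have "G 0 = 1" using mu_supp unfolding G_mu_def .
  ultimately show ?thesis using G_le_1[of r] by linarith
qed

lemma G_strict_less: "r0 \<le> x \<Longrightarrow> x < y \<Longrightarrow> G y < G x"
  using G_strict unfolding monotone_on_def by auto

lemma G_pos: "r0 \<le> x \<Longrightarrow> 0 < G x"
  using G_strict_less[of x "x + 1"] measure_nonneg[of \<mu> "{x + 1..}"]
  unfolding G_mu_def by linarith

lemma G_less_1: "r0 < x \<Longrightarrow> G x < 1"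
  using G_strict_less[of r0 x] G_eq_1[of r0] by simp

lemma G_attains:
  assumes "0 < t" "t \<le> 1"
  shows "\<exists>c\<ge>r0. G c = t"
proof -
  have "eventually (\<lambda>n. G (real n) < t) sequentially"
    using G_mu_tendsto_0[OF finite_measure_axioms mu_sets] assms(1) by (rule order_tendstoD)
  moreover have "eventually (\<lambda>n. r0 \<le> real n) sequentially"
    by (rule eventually_sequentiallyI[of "nat \<lceil>r0\<rceil>"]) linarith
  ultimately obtain n where n: "G (real n) < t" "r0 \<le> real n"
    using eventually_happens'[OF sequentially_bot eventually_conj] by blast
  have "continuous_on {r0..real n} G"
    using G_cont by (rule continuous_on_subset) auto
  then obtain c where "r0 \<le> c" "G c = t"
    using IVT2'[of G "real n" t r0] n assms G_eq_1[of r0] by auto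
  then show ?thesis by blast
qed

lemma
  assumes "0 < t" "t \<le> 1"
  shows Ginv_ge: "r0 \<le> Ginv t" and G_Ginv: "G (Ginv t) = t"
proof -
  obtain c where c: "r0 \<le> c" "G c = t" using G_attains[OF assms] by blast
  have "inj_on G {r0..}"
    using G_strict_less by (metis atLeast_iff inj_on_def linorder_neqE_linordered_idom less_irrefl)
  then have "Ginv t = c" using c by (auto intro!: the_inv_into_f_eq)
  then show "r0 \<le> Ginv t" "G (Ginv t) = t" using c by auto
qed

lemma le_Ginv_iff:
  assumes "0 < t" "t \<le> 1" "r0 \<le> r"
  shows "r \<le> Ginv t \<longleftrightarrow> t \<le> G r"
proof
  assume "r \<le> Ginv t"
  then show "t \<le> G r" using G_antimono G_Ginv[OF assms(1,2)] by metis
next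
  assume "t \<le> G r"
  then show "r \<le> Ginv t"
    using G_strict_less[of "Ginv t" r] Ginv_ge[OF assms(1,2)] G_Ginv[OF assms(1,2)] by fastforce
qed

lemma H_mu_eq_Ginv:
  assumes "0 < t" "t \<le> 1"
  shows "H_mu \<mu> t = Ginv t"
proof -
  have "0 \<le> r \<and> t \<le> G r \<longleftrightarrow> r \<in> {0..Ginv t}" for r
    using le_Ginv_iff[OF assms, of r] Ginv_ge[OF assms] G_eq_1[of r] assms(2)
    by (cases "r0 \<le> r") auto
  then have "{r. 0 \<le> r \<and> t \<le> G r} = {0..Ginv t}" by blast
  moreover have "0 \<le> Ginv t" using Ginv_ge[OF assms] r0_nonneg by simp
  ultimately show ?thesis unfolding H_mu_def by simp
qed

text \<open>\<open>G\<inverse>\<close> extended by \<open>0\<close> to \<open>u \<le> 0\<close>; the function \<open>\<phi>\<close> of the theorem is \<open>quantile \<circ> \<psi>\<close>.\<close>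
definition quantile :: "real \<Rightarrow> real" where
  "quantile u = (if 0 < u then Ginv u else 0)"

lemma quantile_nonneg: "u \<le> 1 \<Longrightarrow> 0 \<le> quantile u"
  using Ginv_ge[of u] r0_nonneg unfolding quantile_def by auto

lemma le_quantile_iff:
  assumes "u \<le> 1"
  shows "r \<le> quantile u \<longleftrightarrow>
    (if r \<le> 0 then True else if r \<le> r0 then 0 < u else 0 < u \<and> u \<le> G r)"
  using Ginv_ge[of u] le_Ginv_iff[of u r] assms r0_nonneg unfolding quantile_def by auto

lemma measurable_quantile:
  assumes U_meas: "U \<in> borel_measurable M" and U_le_1: "\<And>x. x \<in> space M \<Longrightarrow> U x \<le> 1"
  shows "(\<lambda>x. quantile (U x)) \<in> borel_measurable M"
  unfolding borel_measurable_iff_ge using U_meas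
  by (subst Collect_cong[OF conj_cong[OF refl le_quantile_iff[OF U_le_1]]]) (auto split: if_split)

lemma distr_quantile_transform:
  assumes "prob_space P" and U_meas: "U \<in> borel_measurable P"
    and U_le_1: "\<And>x. x \<in> space P \<Longrightarrow> U x \<le> 1"
    and U_uniform: "\<And>s. 0 \<le> s \<Longrightarrow> s < 1 \<Longrightarrow> measure P {x\<in>space P. U x \<le> s} = s"
  shows "distr P borel (\<lambda>x. quantile (U x)) = \<mu>"
proof -
  interpret P: prob_space P by fact
  let ?X = "\<lambda>x. quantile (U x)"
  have X_meas: "?X \<in> borel_measurable P"
    using U_meas U_le_1 by (rule measurable_quantile)
  have null: "measure P {x\<in>space P. U x \<le> 0} = 0"
    using U_uniform by simp
  have "measure P {x\<in>space P. r \<le> ?X x} = G r" for r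
  proof (cases "r \<le> r0")
    case True
    have "{x\<in>space P. 0 < U x} = space P - {x\<in>space P. U x \<le> 0}" by auto
    then have "measure P {x\<in>space P. 0 < U x} = 1"
      using null U_meas by (simp add: P.prob_compl)
    moreover have "{x\<in>space P. r \<le> ?X x} = (if r \<le> 0 then space P else {x\<in>space P. 0 < U x})"
      using le_quantile_iff U_le_1 True by auto
    ultimately show ?thesis using G_eq_1[OF True] by (simp add: P.prob_space)
  next
    case False
    have G: "0 < G r" "G r < 1" using G_pos[of r] G_less_1[of r] False by auto
    have "measure P {x\<in>space P. 0 < U x \<and> U x \<le> G r} =
        measure P ({x\<in>space P. U x \<le> G r} - {x\<in>space P. U x \<le> 0})"
      by (rule arg_cong[where f="measure P"]) auto
    also have "\<dots> = measure P {x\<in>space P. U x \<le> G r} - measure P {x\<in>space P. U x \<le> 0}"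
      using U_meas G by (intro P.finite_measure_Diff) auto
    also have "\<dots> = G r" using null U_uniform[of "G r"] G by simp
    finally have "measure P {x\<in>space P. 0 < U x \<and> U x \<le> G r} = G r" .
    moreover have "{x\<in>space P. r \<le> ?X x} = {x\<in>space P. 0 < U x \<and> U x \<le> G r}"
      using le_quantile_iff U_le_1 False r0_nonneg by auto
    ultimately show ?thesis by simp
  qed
  moreover have "emeasure (distr P borel ?X) {r..} = emeasure P {x\<in>space P. r \<le> ?X x}" for r
    using X_meas by (subst emeasure_distr) (auto intro!: arg_cong[where f="emeasure P"])
  ultimately show ?thesis
    using X_meas mu_sets
    by (intro measure_eqI_atLeast P.finite_measure_distr)
       (auto simp: P.emeasure_eq_measure emeasure_eq_measure G_mu_def)
qed

end

lemma (in real_distribution) cdf_sublevel_eq_atMost: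
  assumes range: "{0<..<1} \<subseteq> range (cdf M)" and s: "0 < s" "s < 1"
  shows "\<exists>b. cdf M b = s \<and> {x. cdf M x \<le> s} = {..b}"
proof -
  define B where "B = {x. cdf M x \<le> s}"
  have attained: "\<exists>y. cdf M y = t" if "0 < t" "t < 1" for t
    using range that by (metis greaterThanLessThan_iff rangeE subsetD)
  obtain y0 where y0: "cdf M y0 = s" using attained s by blast
  obtain y1 where y1: "cdf M y1 = (s + 1) / 2" using attained[of "(s + 1) / 2"] s by auto
  have bdd: "bdd_above B"
  proof (rule bdd_aboveI)
    fix x assume "x \<in> B"
    then show "x \<le> y1" using cdf_nondecreasing[of y1 x] y1 s unfolding B_def by fastforce
  qed
  define b where "b = Sup B"
  have "y0 \<in> B" unfolding B_def using y0 by simp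
  have upper: "x \<in> B \<Longrightarrow> x \<le> b" for x unfolding b_def using bdd by (simp add: cSup_upper)
  have below: "cdf M x \<le> s" if "x < b" for x
  proof -
    have "\<exists>x'\<in>B. x < x'"
      using that less_cSup_iff[OF _ bdd, of x] \<open>y0 \<in> B\<close> unfolding b_def by auto
    then obtain x' where "x' \<in> B" "x < x'" by blast
    then show ?thesis using cdf_nondecreasing[of x x'] unfolding B_def by simp
  qed
  have "cdf M b \<le> s"
  proof (rule ccontr)
    assume "\<not> cdf M b \<le> s"
    moreover have "cdf M b \<le> 1" by (rule cdf_bounded_prob)
    ultimately obtain y where y: "cdf M y = (s + cdf M b) / 2"
      using attained[of "(s + cdf M b) / 2"] s by auto
    show False
      using below[of y] cdf_nondecreasing[of b y] y \<open>\<not> cdf M b \<le> s\<close> by (cases "y < b") auto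
  qed
  moreover have "s \<le> cdf M b"
    using cdf_nondecreasing[OF upper] y0 unfolding B_def by fastforce
  ultimately have "cdf M b = s" by simp
  moreover have "B = {..b}"
    using upper cdf_nondecreasing[of _ b] \<open>cdf M b = s\<close> unfolding B_def by fastforce
  ultimately show ?thesis unfolding B_def by blast
qed

lemma (in real_distribution) measure_cdf_le:
  assumes range: "{0<..<1} \<subseteq> range (cdf M)" and s: "0 \<le> s" "s < 1"
  shows "measure M {x. cdf M x \<le> s} = s"
proof -
  have uniform: "measure M {x. cdf M x \<le> t} = t" if "0 < t" "t < 1" for t
    using cdf_sublevel_eq_atMost[OF range that] by (metis cdf_def2)
  have "cdf M \<in> borel_measurable borel"
    by (rule borel_measurable_mono) (simp add: mono_def cdf_nondecreasing)
  then have sublevel_sets: "{x. cdf M x \<le> t} \<in> sets M" for t by measurable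
  have "measure M {x. cdf M x \<le> 0} \<le> 0 + e" if "0 < e" for e
  proof -
    define t where "t = min e (1/2)"
    have t: "0 < t" "t < 1" "t \<le> e" using that unfolding t_def by auto
    have "measure M {x. cdf M x \<le> 0} \<le> measure M {x. cdf M x \<le> t}"
      using sublevel_sets t by (intro finite_measure_mono) auto
    also have "\<dots> \<le> e" using uniform[OF t(1,2)] t(3) by simp
    finally show ?thesis by simp
  qed
  then have "measure M {x. cdf M x \<le> 0} = 0"
    using field_le_epsilon measure_nonneg by (metis antisym)
  then show ?thesis using uniform s by (cases "s = 0") auto
qed

lemma (in prob_space) cdf_distr:
  assumes "Y \<in> borel_measurable M"
  shows "cdf (distr M borel Y) y = measure M {x\<in>space M. Y x \<le> y}"
  using assms unfolding cdf_def by (subst measure_distr) (auto intro!: arg_cong[where f="measure M"])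

lemma (in prob_space) measure_cdf_distr_le:
  assumes Y: "Y \<in> borel_measurable M" and range: "{0<..<1} \<subseteq> range (cdf (distr M borel Y))"
    and s: "0 \<le> s" "s < 1"
  shows "measure M {x\<in>space M. cdf (distr M borel Y) (Y x) \<le> s} = s"
proof -
  let ?D = "distr M borel Y"
  interpret D: real_distribution ?D using Y by simp
  have "cdf ?D \<in> borel_measurable borel"
    by (rule borel_measurable_mono) (simp add: mono_def D.cdf_nondecreasing)
  then have "measure ?D {y. cdf ?D y \<le> s} = measure M (Y -` {y. cdf ?D y \<le> s} \<inter> space M)"
    using Y by (intro measure_distr) auto
  then show ?thesis using D.measure_cdf_le[OF range s] by (simp add: vimage_def Int_def conj_commute)
qed

lemma has_integral_powr_derivative:
  fixes l x :: real
  assumes "0 < l" "0 \<le> x"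
  shows "((\<lambda>z. (l + 1) * z powr l) has_integral x powr (l + 1)) {0..x}"
proof -
  have "((\<lambda>z. (l + 1) * z powr l) has_integral (x powr (l + 1) - 0 powr (l + 1))) {0..x}"
  proof (rule fundamental_theorem_of_calculus_interior)
    show "continuous_on {0..x} (\<lambda>z. z powr (l + 1))"
      using assms by (intro continuous_on_powr') (auto intro: continuous_intros)
    fix z assume "z \<in> {0<..<x}"
    then have "((\<lambda>z. z powr (l + 1)) has_real_derivative (l + 1) * z powr (l + 1 - 1)) (at z)"
      by (intro has_real_derivative_powr) auto
    then show "((\<lambda>z. z powr (l + 1)) has_vector_derivative (l + 1) * z powr l) (at z)"
      by (simp add: has_real_derivative_iff_has_vector_derivative)
  qed (use assms in auto)
  then show ?thesis by simp
qed

text \<open>Tonelli applied to \<open>x\<^sup>l\<^sup>+\<^sup>1 = (l + 1) \<integral>\<^sub>0\<^sup>x z\<^sup>l dz\<close>.\<close>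
lemma nn_integral_powr_eq_tail_integral:
  fixes \<mu> :: "real measure" and l :: real
  assumes "prob_space \<mu>" and sets: "sets \<mu> = sets borel" and supp: "measure \<mu> {0..} = 1"
    and l: "0 < l"
  shows "(\<integral>\<^sup>+x. ennreal (x powr (l + 1)) \<partial>\<mu>) =
    ennreal (l + 1) * (\<integral>\<^sup>+ z. indicator {0..} z * ennreal (G_mu \<mu> z * z powr l) \<partial>lborel)"
proof -
  interpret mu: prob_space \<mu> by fact
  interpret pair_sigma_finite lborel \<mu> by unfold_locales
  define k where "k z x = ennreal ((l + 1) * z powr l) * indicator {0..x} z" for z x :: real
  have "(\<lambda>(z, x). k z x) \<in> borel_measurable (borel \<Otimes>\<^sub>M borel)"
    unfolding k_def indicator_def atLeastAtMost_iff by measurable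
  then have k_meas: "(\<lambda>(z, x). k z x) \<in> borel_measurable (lborel \<Otimes>\<^sub>M \<mu>)"
    by (simp cong: measurable_cong_sets sets_pair_measure_cong add: sets)
  have inner_x: "(\<integral>\<^sup>+ x. k z x \<partial>\<mu>) = ennreal (l + 1) * (indicator {0..} z * ennreal (G_mu \<mu> z * z powr l))" for z
  proof -
    have "(\<integral>\<^sup>+ x. k z x \<partial>\<mu>) = (\<integral>\<^sup>+ x. (ennreal ((l + 1) * z powr l) * indicator {0..} z) * indicator {z..} x \<partial>\<mu>)"
      unfolding k_def by (intro nn_integral_cong) (auto split: split_indicator)
    also have "\<dots> = (ennreal ((l + 1) * z powr l) * indicator {0..} z) * emeasure \<mu> {z..}"
      using sets by (intro nn_integral_cmult_indicator) auto
    finally show ?thesis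
      using l unfolding G_mu_def mu.emeasure_eq_measure by (simp add: ennreal_mult mult_ac)
  qed
  have inner_z: "(\<integral>\<^sup>+ z. k z x \<partial>lborel) = ennreal (x powr (l + 1))" if "0 \<le> x" for x
    unfolding k_def using has_integral_powr_derivative[OF l that] l that
    by (intro nn_integral_has_integral_lebesgue') auto
  have "AE x in \<mu>. x \<in> {0..}"
    using supp sets by (intro mu.AE_prob_1) auto
  then have "(\<integral>\<^sup>+x. ennreal (x powr (l + 1)) \<partial>\<mu>) = (\<integral>\<^sup>+ x. (\<integral>\<^sup>+ z. k z x \<partial>lborel) \<partial>\<mu>)"
    by (intro nn_integral_cong_AE) (auto simp: inner_z)
  also have "\<dots> = (\<integral>\<^sup>+ z. (\<integral>\<^sup>+ x. k z x \<partial>\<mu>) \<partial>lborel)"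
    using Fubini'[of "\<lambda>z x. k z x"] k_meas by simp
  also have "\<dots> = ennreal (l + 1) * (\<integral>\<^sup>+ z. indicator {0..} z * ennreal (G_mu \<mu> z * z powr l) \<partial>lborel)"
    using borel_measurable_G_mu[OF mu.finite_measure_axioms sets]
    unfolding inner_x by (intro nn_integral_cmult) (simp add: measurable_cong_sets[OF sets_lborel refl])
  finally show ?thesis .
qed

lemma eexp_mult_eln:
  assumes "0 \<le> y" "0 < l"
  shows "eexp (ereal l * eln (ennreal y)) = ennreal (y powr l)"
  using assms by (cases "y = 0") (auto simp: eln_def eexp_def powr_def)

lemma density_mem_U_mu:
  fixes \<mu> :: "real measure"
  assumes mu: "prob_space \<mu>" "sets \<mu> = sets borel" "measure \<mu> {0..} = 1"
    and mu_mean: "(\<integral>\<^sup>+ x. ennreal x \<partial>\<mu>) = 1"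
    and P: "prob_space P" and X: "X \<in> borel_measurable P" "\<And>x. x \<in> space P \<Longrightarrow> 0 \<le> X x"
    and distr_X: "distr P borel X = \<mu>"
  defines "Q \<equiv> density P (\<lambda>x. ennreal (X x))"
  shows "prob_space Q \<and> distr P borel (\<lambda>x. enn2real (RN_deriv P Q x)) = \<mu> \<and> Q \<in> U_mu \<mu> P"
proof -
  interpret P: prob_space P by fact
  have moment: "(\<integral>\<^sup>+x. f (X x) \<partial>P) = (\<integral>\<^sup>+y. f y \<partial>\<mu>)" if "f \<in> borel_measurable borel" for f
    using X that by (simp add: nn_integral_distr flip: distr_X)
  have "emeasure Q (space Q) = 1"
    using moment[of ennreal] mu_mean X unfolding Q_def
    by (subst emeasure_density) (auto intro!: nn_integral_cong split: split_indicator)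
  then have Q_prob: "prob_space Q" by (rule prob_spaceI)
  have sets_Q: "sets Q = sets P" unfolding Q_def by simp
  have ac: "absolutely_continuous P Q" unfolding Q_def
    using X by (intro absolutely_continuousI_density) auto
  have RN_P: "AE x in P. RN_deriv P Q x = ennreal (X x)"
    unfolding Q_def using X by (intro AE_symmetric[OF P.RN_deriv_unique]) auto
  then have RN_Q: "AE x in Q. RN_deriv P Q x = ennreal (X x)"
    by (rule absolutely_continuous_AE[OF sets_Q ac])
  have "distr P borel (\<lambda>x. enn2real (RN_deriv P Q x)) = distr P borel X"
    using RN_P X by (intro distr_cong_AE) (auto elim!: AE_mp)
  then have distr_RN: "distr P borel (\<lambda>x. enn2real (RN_deriv P Q x)) = \<mu>"
    using distr_X by simp
  have "Lambda_Q Q (\<lambda>x. eln (RN_deriv P Q x)) l = Lambda_mu \<mu> l" if l: "0 < l" for l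
  proof -
    have "(\<integral>\<^sup>+ x. eexp (ereal l * eln (RN_deriv P Q x)) \<partial>Q) = (\<integral>\<^sup>+ x. ennreal (X x powr l) \<partial>Q)"
      using RN_Q X(2) l by (intro nn_integral_cong_AE) (auto simp: eexp_mult_eln sets_eq_imp_space_eq[OF sets_Q] elim!: AE_mp)
    also have "\<dots> = (\<integral>\<^sup>+ x. ennreal (X x powr (l + 1)) \<partial>P)"
      unfolding Q_def using X
      by (subst nn_integral_density) (auto intro!: nn_integral_cong simp: powr_mult_base ennreal_mult[symmetric] add.commute)
    also have "\<dots> = ennreal (l + 1) * (\<integral>\<^sup>+ z. indicator {0..} z * ennreal (G_mu \<mu> z * z powr l) \<partial>lborel)"
      using moment[of "\<lambda>y. ennreal (y powr (l + 1))"] nn_integral_powr_eq_tail_integral[OF mu l] by simp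
    finally show ?thesis unfolding Lambda_Q_def Lambda_mu_def by simp
  qed
  then have "Q \<in> U_mu \<mu> P" unfolding U_mu_def using Q_prob sets_Q ac by auto
  then show ?thesis using Q_prob distr_RN by blast
qed

theorem mainTheorem6:
  fixes \<mu> :: "real measure" and r0 :: real
    and P \<nu> :: "'a measure" and p :: "'a \<Rightarrow> real"
  assumes mu_prob: "prob_space \<mu>" and mu_sets: "sets \<mu> = sets borel"
    and mu_supp: "measure \<mu> {0..} = 1"
    and mu_mean: "(\<integral>\<^sup>+ x. ennreal x \<partial>\<mu>) = 1"
    and mu_Lambda_fin: "\<exists>\<epsilon>>0. \<forall>l\<in>{0..<\<epsilon>}. Lambda_mu \<mu> l \<noteq> \<infinity> \<and> Lambda_mu \<mu> l \<noteq> -\<infinity>"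
    and r0_nonneg: "0 \<le> r0"
    and r0_one: "\<forall>r\<in>{0..r0}. G_mu \<mu> r = 1"
    and r0_less: "\<forall>r\<in>{r0<..}. G_mu \<mu> r < 1"
    and G_cont: "continuous_on {r0..} (G_mu \<mu>)"
    and G_strict: "strict_antimono_on {r0..} (G_mu \<mu>)"
    and nu_sf: "sigma_finite_measure \<nu>"
    and p_meas: "p \<in> borel_measurable \<nu>"
    and p_nonneg: "\<forall>x\<in>space \<nu>. 0 \<le> p x"
    and P_def: "P = density \<nu> (\<lambda>x. ennreal (p x))"
    and P_prob: "prob_space P"
    and psi_range: "{0<..<1} \<subseteq> (\<lambda>y. measure P {x\<in>space P. p x \<le> y}) ` {0..}"
  shows "(\<forall>\<rho>\<in>{0<..1}. H_mu \<mu> \<rho> = the_inv_into {r0..} (G_mu \<mu>) \<rho>) \<and>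
    (let \<psi> = (\<lambda>y. measure P {x\<in>space P. p x \<le> y});
         \<phi> = (\<lambda>y. if \<psi> y > 0 then the_inv_into {r0..} (G_mu \<mu>) (\<psi> y) else 0);
         Q = density P (\<lambda>x. ennreal (\<phi> (p x)))
     in prob_space Q \<and>
        distr P borel (\<lambda>x. enn2real (RN_deriv P Q x)) = \<mu> \<and>
        Q \<in> U_mu \<mu> P)"
proof -
  interpret P: prob_space P by (rule P_prob)
  interpret invertible_tail \<mu> r0
    by (rule invertible_tail.intro) (fact mu_prob mu_sets mu_supp r0_nonneg r0_one G_cont G_strict)+
  have p_meas_P: "p \<in> borel_measurable P"
    using p_meas unfolding P_def by (simp cong: measurable_cong_sets)
  define \<psi> where "\<psi> y = measure P {x\<in>space P. p x \<le> y}" for y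
  have \<psi>_cdf: "\<psi> = cdf (distr P borel p)"
    using P.cdf_distr[OF p_meas_P] unfolding \<psi>_def by auto
  let ?U = "\<lambda>x. \<psi> (p x)" and ?X = "\<lambda>x. quantile (\<psi> (p x))"
  interpret D: real_distribution "distr P borel p" using p_meas_P by simp
  have "mono \<psi>" unfolding \<psi>_cdf by (simp add: mono_def D.cdf_nondecreasing)
  then have U_meas: "?U \<in> borel_measurable P"
    by (rule measurable_compose[OF p_meas_P borel_measurable_mono])
  have U_le_1: "?U x \<le> 1" for x unfolding \<psi>_def by simp
  have "{0<..<1} \<subseteq> range (cdf (distr P borel p))"
    using psi_range unfolding \<psi>_cdf[unfolded \<psi>_def, symmetric] by blast
  then have "distr P borel ?X = \<mu>"
    using P.measure_cdf_distr_le[OF p_meas_P] U_meas U_le_1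
    by (intro distr_quantile_transform[OF P_prob]) (auto simp: \<psi>_cdf)
  then have "let Q = density P (\<lambda>x. ennreal (?X x)) in prob_space Q \<and>
      distr P borel (\<lambda>x. enn2real (RN_deriv P Q x)) = \<mu> \<and> Q \<in> U_mu \<mu> P"
    using measurable_quantile[OF U_meas U_le_1] quantile_nonneg[OF U_le_1] unfolding Let_def
    by (intro density_mem_U_mu mu_prob mu_sets mu_supp mu_mean P_prob)
  then show ?thesis
    using H_mu_eq_Ginv unfolding \<psi>_def quantile_def by (simp add: Let_def)
qed

end
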